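(* Let $n$ and $m$ be coprime positive integers. Then $c_{\mathrm{poly}}(nm)\geq c_{\mathrm{poly}}(n)\,c_{\mathrm{poly}}(m)$.
   Context: $S(\mathbb{Z}_n)$ is the set of bijections $\mathbb{Z}_n\to\mathbb{Z}_n$, and $S_{\mathrm{poly}}(\mathbb{Z}_n)$ is the set of $\pi\in S(\mathbb{Z}_n)$ for which there is a polynomial $f\in\mathbb{Z}_n[x]$ with $\pi(x)=f(x)$ for all $x\in\mathbb{Z}_n$. $\mathrm{cyc}(\pi)$ is the number of cycles (including fixed points) of $\pi$. Define $c_{\mathrm{poly}}(n)=\min_{\pi\in S_{\mathrm{poly}}(\mathbb{Z}_n)}\max_{k\in\mathbb{Z}_n}\mathrm{cyc}(x\mapsto\pi(x+k))$. *)

theory Defs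
  imports "HOL-Computational_Algebra.Polynomial"
begin

text \<open>Z_n is modelled by {0..<n} (n > 0); maps Z_n -> Z_n are functions nat => nat,
  normalised to be the identity outside {0..<n}.\<close>

definition perm_Zn :: "nat \<Rightarrow> (nat \<Rightarrow> nat) set" where
  "perm_Zn n = {\<pi>. bij_betw \<pi> {0..<n} {0..<n} \<and> (\<forall>x. n \<le> x \<longrightarrow> \<pi> x = x)}"

definition poly_perm_Zn :: "nat \<Rightarrow> (nat \<Rightarrow> nat) set" where
  "poly_perm_Zn n = {\<pi> \<in> perm_Zn n.
     \<exists>f :: int poly. \<forall>x<n. int (\<pi> x) = poly f (int x) mod int n}"

text \<open>Number of cycles (including fixed points) of a permutation of {0..<n}: the number of
  orbits, i.e. equivalence classes of x ~ y iff y = pi^k(x) for some k.\<close>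
definition cyc :: "nat \<Rightarrow> (nat \<Rightarrow> nat) \<Rightarrow> nat" where
  "cyc n \<pi> = card ({0..<n} // {(x, y). x < n \<and> y < n \<and> (\<exists>k. (\<pi> ^^ k) x = y)})"

definition shift_Zn :: "nat \<Rightarrow> (nat \<Rightarrow> nat) \<Rightarrow> nat \<Rightarrow> (nat \<Rightarrow> nat)" where
  "shift_Zn n \<pi> k = (\<lambda>x. if x < n then \<pi> ((x + k) mod n) else x)"

definition c_poly :: "nat \<Rightarrow> nat" where
  "c_poly n = Min ((\<lambda>\<pi>. Max ((\<lambda>k. cyc n (shift_Zn n \<pi> k)) ` {0..<n})) ` poly_perm_Zn n)"

end

theory Submission
  imports Defs "HOL-Number_Theory.Cong" "HOL-Library.FuncSet"
begin

text \<open>A polynomial permutation \<pi> of Z_nm reduces modulo n and modulo m to polynomial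
  permutations \<pi>_n, \<pi>_m (given by the same polynomial), and every shift x \<mapsto> \<pi>(x + k)
  reduces to the shifts of \<pi>_n and \<pi>_m by k mod n and k mod m. By the Chinese remainder
  theorem a single k realises the maximal cycle counts of both reductions at once. Finally, a
  map on Z_nm that reduces to \<sigma> on Z_n and to \<tau> on Z_m has at least cyc \<sigma> * cyc \<tau> cycles:
  its orbits map onto orbits of \<sigma> and of \<tau>, and by the Chinese remainder theorem every pair
  of such orbits is hit.\<close>

definition orbit_Zn :: "nat \<Rightarrow> (nat \<Rightarrow> nat) \<Rightarrow> nat \<Rightarrow> nat set" where
  "orbit_Zn n \<sigma> x = {y. y < n \<and> (\<exists>k. (\<sigma> ^^ k) x = y)}"

lemma cyc_eq_card_orbits: "cyc n \<sigma> = card (orbit_Zn n \<sigma> ` {0..<n})"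
  unfolding cyc_def orbit_Zn_def quotient_def
  by (rule arg_cong[where f = card]) (auto simp: Image_def)

lemma funpow_less:
  assumes "\<forall>x<N. \<rho> x < N" and "x < N"
  shows "(\<rho> ^^ k) x < N"
  using assms by (induction k) auto

lemma funpow_mod_semiconj:
  assumes into: "\<forall>x<N. \<rho> x < N" and semiconj: "\<forall>x<N. \<rho> x mod d = \<sigma> (x mod d)"
    and "x < N"
  shows "(\<rho> ^^ k) x mod d = (\<sigma> ^^ k) (x mod d)"
proof (induction k)
  case (Suc k)
  have "(\<rho> ^^ k) x < N" using funpow_less[OF into \<open>x < N\<close>] .
  then show ?case using semiconj Suc.IH by simp
qed simp

lemma orbit_Zn_image_mod:
  assumes into: "\<forall>x<N. \<rho> x < N" and semiconj: "\<forall>x<N. \<rho> x mod d = \<sigma> (x mod d)"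
    and "0 < d" and "x < N"
  shows "(\<lambda>y. y mod d) ` orbit_Zn N \<rho> x = orbit_Zn d \<sigma> (x mod d)"
proof -
  have iter: "(\<rho> ^^ k) x mod d = (\<sigma> ^^ k) (x mod d)" for k
    using funpow_mod_semiconj[OF into semiconj \<open>x < N\<close>] .
  have "orbit_Zn N \<rho> x = range (\<lambda>k. (\<rho> ^^ k) x)"
    using funpow_less[OF into \<open>x < N\<close>] by (auto simp: orbit_Zn_def)
  moreover have "orbit_Zn d \<sigma> (x mod d) = range (\<lambda>k. (\<sigma> ^^ k) (x mod d))"
    using iter[symmetric] \<open>0 < d\<close> by (auto simp: orbit_Zn_def)
  ultimately show ?thesis by (simp add: image_image iter)
qed

lemma chinese_remainder_below:
  fixes n m a b :: nat
  assumes "coprime n m" and "a < n" and "b < m"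
  obtains x where "x < n * m" and "x mod n = a" and "x mod m = b"
proof -
  from binary_chinese_remainder_unique_nat[OF assms(1), of a b] assms(2,3)
  obtain x where "x < n * m" "[x = a] (mod n)" "[x = b] (mod m)" by auto
  with assms(2,3) show ?thesis by (intro that) (auto simp: cong_def)
qed

lemma cyc_mult_le:
  fixes \<rho> \<sigma> \<tau> :: "nat \<Rightarrow> nat"
  assumes into: "\<forall>x<n*m. \<rho> x < n*m"
    and semiconj_n: "\<forall>x<n*m. \<rho> x mod n = \<sigma> (x mod n)"
    and semiconj_m: "\<forall>x<n*m. \<rho> x mod m = \<tau> (x mod m)"
    and "0 < n" and "0 < m" and "coprime n m"
  shows "cyc n \<sigma> * cyc m \<tau> \<le> cyc (n*m) \<rho>"
proof -
  let ?reduce = "\<lambda>S. ((\<lambda>y. y mod n) ` S, (\<lambda>y. y mod m) ` S)"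
  have "orbit_Zn n \<sigma> ` {0..<n} \<times> orbit_Zn m \<tau> ` {0..<m} \<subseteq> ?reduce ` orbit_Zn (n*m) \<rho> ` {0..<n*m}"
  proof clarify
    fix a b assume "a \<in> {0..<n}" "b \<in> {0..<m}"
    then obtain x where x: "x < n * m" "x mod n = a" "x mod m = b"
      using chinese_remainder_below[OF \<open>coprime n m\<close>] by auto
    have "?reduce (orbit_Zn (n*m) \<rho> x) = (orbit_Zn n \<sigma> a, orbit_Zn m \<tau> b)"
      using orbit_Zn_image_mod[OF into semiconj_n \<open>0 < n\<close> x(1)]
        orbit_Zn_image_mod[OF into semiconj_m \<open>0 < m\<close> x(1)] x(2,3) by simp
    moreover have "orbit_Zn (n*m) \<rho> x \<in> orbit_Zn (n*m) \<rho> ` {0..<n*m}"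
      using x(1) by simp
    ultimately show "(orbit_Zn n \<sigma> a, orbit_Zn m \<tau> b) \<in> ?reduce ` orbit_Zn (n*m) \<rho> ` {0..<n*m}"
      by (rule image_eqI[OF sym])
  qed
  then have "card (orbit_Zn n \<sigma> ` {0..<n} \<times> orbit_Zn m \<tau> ` {0..<m})
      \<le> card (orbit_Zn (n*m) \<rho> ` {0..<n*m})"
    by (rule surj_card_le[rotated]) simp
  then show ?thesis by (simp add: cyc_eq_card_orbits card_cartesian_product)
qed

lemma cong_poly:
  fixes f :: "'a::unique_euclidean_semiring poly"
  assumes "[x = y] (mod d)"
  shows "[poly f x = poly f y] (mod d)"
proof (induction f)
  case (pCons a f)
  then show ?case by (simp add: cong_add cong_mult assms)
qed simp

definition reduce_Zn :: "nat \<Rightarrow> (nat \<Rightarrow> nat) \<Rightarrow> (nat \<Rightarrow> nat)" where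
  "reduce_Zn d \<pi> = (\<lambda>y. if y < d then \<pi> y mod d else y)"

lemma poly_perm_Zn_mod:
  assumes f: "\<forall>x<N. int (\<pi> x) = poly f (int x) mod int N"
    and "d dvd N" and "y < N"
  shows "\<pi> y mod d = \<pi> (y mod d) mod d"
proof -
  have "y mod d < N"
    using \<open>y < N\<close> by (metis le_less_trans mod_less_eq_dividend)
  have dvd: "int d dvd int N" using \<open>d dvd N\<close> by simp
  have "int (\<pi> y mod d) = poly f (int y) mod int d"
    using f \<open>y < N\<close> dvd by (simp add: of_nat_mod mod_mod_cancel)
  also have "\<dots> = poly f (int (y mod d)) mod int d"
    using cong_poly[of "int y" "int (y mod d)" "int d" f]
    by (simp add: cong_def of_nat_mod)
  also have "\<dots> = int (\<pi> (y mod d) mod d)"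
    using f \<open>y mod d < N\<close> dvd by (simp add: of_nat_mod mod_mod_cancel)
  finally show ?thesis by simp
qed

lemma reduce_Zn_poly_perm:
  assumes \<pi>: "\<pi> \<in> poly_perm_Zn N" and "d dvd N" and "0 < d" and "0 < N"
  shows "reduce_Zn d \<pi> \<in> poly_perm_Zn d"
proof -
  obtain f :: "int poly" where f: "\<forall>x<N. int (\<pi> x) = poly f (int x) mod int N"
    using \<pi> unfolding poly_perm_Zn_def by auto
  have bij: "bij_betw \<pi> {0..<N} {0..<N}"
    using \<pi> unfolding poly_perm_Zn_def perm_Zn_def by auto
  have "d \<le> N" using \<open>d dvd N\<close> \<open>0 < N\<close> by (simp add: dvd_imp_le)
  have "{0..<d} \<subseteq> reduce_Zn d \<pi> ` {0..<d}"
  proof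
    fix z assume z: "z \<in> {0..<d}"
    with bij \<open>d \<le> N\<close> obtain y where "y < N" "\<pi> y = z"
      unfolding bij_betw_def by (metis atLeastLessThan_iff imageE order_less_le_trans)
    then have "reduce_Zn d \<pi> (y mod d) = z"
      using poly_perm_Zn_mod[OF f \<open>d dvd N\<close> \<open>y < N\<close>] z \<open>0 < d\<close>
      by (simp add: reduce_Zn_def)
    then show "z \<in> reduce_Zn d \<pi> ` {0..<d}" using \<open>0 < d\<close> by force
  qed
  then have "reduce_Zn d \<pi> ` {0..<d} = {0..<d}"
    using \<open>0 < d\<close> by (auto simp: reduce_Zn_def)
  then have "bij_betw (reduce_Zn d \<pi>) {0..<d} {0..<d}"
    by (simp add: bij_betw_def eq_card_imp_inj_on)
  moreover have "\<forall>x<d. int (reduce_Zn d \<pi> x) = poly f (int x) mod int d"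
    using f \<open>d \<le> N\<close> \<open>d dvd N\<close>
    by (auto simp: reduce_Zn_def of_nat_mod mod_mod_cancel)
  ultimately show ?thesis
    unfolding poly_perm_Zn_def perm_Zn_def by (auto simp: reduce_Zn_def)
qed

lemma finite_perm_Zn: "finite (perm_Zn N)"
proof (rule finite_imageD)
  show "inj_on (\<lambda>\<pi>. restrict \<pi> {0..<N}) (perm_Zn N)"
  proof (rule inj_onI, rule ext)
    fix \<pi> \<pi>' x assume "\<pi> \<in> perm_Zn N" "\<pi>' \<in> perm_Zn N"
      and "restrict \<pi> {0..<N} = restrict \<pi>' {0..<N}"
    then show "\<pi> x = \<pi>' x"
      unfolding perm_Zn_def by (cases "x < N") (auto dest: fun_cong[where x = x])
  qed
  have "(\<lambda>\<pi>. restrict \<pi> {0..<N}) ` perm_Zn N \<subseteq> PiE {0..<N} (\<lambda>_. {0..<N})"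
    unfolding perm_Zn_def bij_betw_def by auto
  then show "finite ((\<lambda>\<pi>. restrict \<pi> {0..<N}) ` perm_Zn N)"
    by (rule finite_subset) (simp add: finite_PiE)
qed

lemma finite_poly_perm_Zn: "finite (poly_perm_Zn N)"
  using finite_perm_Zn by (rule rev_finite_subset) (auto simp: poly_perm_Zn_def)

lemma id_in_poly_perm_Zn: "id \<in> poly_perm_Zn N"
proof -
  have "\<forall>x<N. int (id x) = poly [:0, 1:] (int x) mod int N" by simp
  then have "\<exists>f :: int poly. \<forall>x<N. int (id x) = poly f (int x) mod int N" by blast
  then show ?thesis unfolding poly_perm_Zn_def perm_Zn_def by auto
qed

lemma shift_Zn_less:
  assumes "\<pi> \<in> poly_perm_Zn N"
  shows "\<forall>x<N. shift_Zn N \<pi> k x < N"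
  using assms unfolding poly_perm_Zn_def perm_Zn_def bij_betw_def shift_Zn_def by auto

lemma shift_Zn_mod: "shift_Zn d \<pi> (k mod d) = shift_Zn d \<pi> k"
  unfolding shift_Zn_def by (metis mod_add_right_eq)

lemma shift_Zn_reduce:
  assumes \<pi>: "\<pi> \<in> poly_perm_Zn N" and "d dvd N" and "0 < d"
  shows "\<forall>x<N. shift_Zn N \<pi> k x mod d = shift_Zn d (reduce_Zn d \<pi>) k (x mod d)"
proof (intro allI impI)
  fix x assume "x < N"
  obtain f :: "int poly" where f: "\<forall>x<N. int (\<pi> x) = poly f (int x) mod int N"
    using \<pi> unfolding poly_perm_Zn_def by auto
  define y where "y = (x + k) mod N"
  have "y < N" using \<open>x < N\<close> y_def by simp
  have "y mod d = (x mod d + k) mod d"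
    using \<open>d dvd N\<close> unfolding y_def by (simp add: mod_mod_cancel mod_add_left_eq)
  then have "\<pi> (y mod d) mod d = shift_Zn d (reduce_Zn d \<pi>) k (x mod d)"
    using \<open>0 < d\<close> by (simp add: shift_Zn_def reduce_Zn_def)
  moreover have "shift_Zn N \<pi> k x mod d = \<pi> y mod d"
    using \<open>x < N\<close> by (simp add: shift_Zn_def y_def)
  ultimately show "shift_Zn N \<pi> k x mod d = shift_Zn d (reduce_Zn d \<pi>) k (x mod d)"
    using poly_perm_Zn_mod[OF f \<open>d dvd N\<close> \<open>y < N\<close>] by simp
qed

definition max_shift_cyc :: "nat \<Rightarrow> (nat \<Rightarrow> nat) \<Rightarrow> nat" where
  "max_shift_cyc N \<pi> = Max ((\<lambda>k. cyc N (shift_Zn N \<pi> k)) ` {0..<N})"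

lemma c_poly_eq_Min_max_shift_cyc: "c_poly N = Min (max_shift_cyc N ` poly_perm_Zn N)"
  by (simp add: c_poly_def max_shift_cyc_def)

lemma c_poly_le_max_shift_cyc: "\<pi> \<in> poly_perm_Zn N \<Longrightarrow> c_poly N \<le> max_shift_cyc N \<pi>"
  unfolding c_poly_eq_Min_max_shift_cyc by (rule Min_le) (auto simp: finite_poly_perm_Zn)

lemma cyc_shift_le_max_shift_cyc: "k < N \<Longrightarrow> cyc N (shift_Zn N \<pi> k) \<le> max_shift_cyc N \<pi>"
  unfolding max_shift_cyc_def by (rule Max_ge) auto

lemma max_shift_cyc_attained:
  assumes "0 < N"
  obtains k where "k < N" and "max_shift_cyc N \<pi> = cyc N (shift_Zn N \<pi> k)"
proof -
  have "max_shift_cyc N \<pi> \<in> (\<lambda>k. cyc N (shift_Zn N \<pi> k)) ` {0..<N}"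
    unfolding max_shift_cyc_def by (rule Max_in) (use assms in auto)
  then show ?thesis using that by auto
qed

lemma max_shift_cyc_reduce_mult_le:
  assumes \<pi>: "\<pi> \<in> poly_perm_Zn (n*m)" and "0 < n" and "0 < m" and "coprime n m"
  shows "max_shift_cyc n (reduce_Zn n \<pi>) * max_shift_cyc m (reduce_Zn m \<pi>)
    \<le> max_shift_cyc (n*m) \<pi>"
proof -
  obtain k1 where "k1 < n"
    and k1: "max_shift_cyc n (reduce_Zn n \<pi>) = cyc n (shift_Zn n (reduce_Zn n \<pi>) k1)"
    using max_shift_cyc_attained[OF \<open>0 < n\<close>] .
  obtain k2 where "k2 < m"
    and k2: "max_shift_cyc m (reduce_Zn m \<pi>) = cyc m (shift_Zn m (reduce_Zn m \<pi>) k2)"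
    using max_shift_cyc_attained[OF \<open>0 < m\<close>] .
  obtain k where "k < n * m" "k mod n = k1" "k mod m = k2"
    using chinese_remainder_below[OF \<open>coprime n m\<close> \<open>k1 < n\<close> \<open>k2 < m\<close>] .
  then have "max_shift_cyc n (reduce_Zn n \<pi>) * max_shift_cyc m (reduce_Zn m \<pi>)
      = cyc n (shift_Zn n (reduce_Zn n \<pi>) k) * cyc m (shift_Zn m (reduce_Zn m \<pi>) k)"
    using k1 k2 shift_Zn_mod by metis
  also have "\<dots> \<le> cyc (n*m) (shift_Zn (n*m) \<pi> k)"
    by (intro cyc_mult_le shift_Zn_less[OF \<pi>] shift_Zn_reduce[OF \<pi>] assms) simp_all
  also have "\<dots> \<le> max_shift_cyc (n*m) \<pi>"
    using \<open>k < n * m\<close> by (rule cyc_shift_le_max_shift_cyc)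
  finally show ?thesis .
qed

theorem lemma5p1:
  fixes n m :: nat
  assumes "0 < n" and "0 < m" and "coprime n m"
  shows "c_poly (n * m) \<ge> c_poly n * c_poly m"
  unfolding c_poly_eq_Min_max_shift_cyc[of "n * m"]
proof (rule Min.boundedI)
  show "finite (max_shift_cyc (n * m) ` poly_perm_Zn (n * m))"
    by (simp add: finite_poly_perm_Zn)
  show "max_shift_cyc (n * m) ` poly_perm_Zn (n * m) \<noteq> {}"
    using id_in_poly_perm_Zn by blast
next
  fix c assume "c \<in> max_shift_cyc (n * m) ` poly_perm_Zn (n * m)"
  then obtain \<pi> where \<pi>: "\<pi> \<in> poly_perm_Zn (n * m)" and c: "c = max_shift_cyc (n * m) \<pi>"
    by blast
  have "0 < n * m" using assms by simp
  have "c_poly n * c_poly m \<le> max_shift_cyc n (reduce_Zn n \<pi>) * max_shift_cyc m (reduce_Zn m \<pi>)"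
    using reduce_Zn_poly_perm[OF \<pi> _ _ \<open>0 < n * m\<close>] assms
    by (intro mult_le_mono c_poly_le_max_shift_cyc) simp_all
  also have "\<dots> \<le> c"
    unfolding c using max_shift_cyc_reduce_mult_le[OF \<pi> assms] .
  finally show "c_poly n * c_poly m \<le> c" .
qed

end
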